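(* Let $(M,\rho)$ be a metric space, let $f,g:M\to\mathbb{R}\cup\{+\infty\}$, and let $\lambda\in\mathbb{R}$ be such that $L_\lambda(f-g)\cap\operatorname{dom} f\cap\operatorname{dom} g\neq\varnothing$. Let $M_1:=L_\lambda(f-g)$ and $f_1:=f|_{M_1}$, regarded as a function on $(M_1,\rho)$. If $x\in M_1\cap\operatorname{dom} g$ satisfies $|\widetilde\nabla f|(x)>|\widetilde\nabla g|(x)$, then $|\widetilde\nabla f_1|(x)=|\widetilde\nabla f|(x)$.
   Context: Functions take values in $\mathbb{R}\cup\{+\infty\}$; $\operatorname{dom} f:=\{x:f(x)<+\infty\}$; the expression $\infty-\infty$ is undefined. For $\lambda\in\mathbb{R}$, $L_\lambda(f-g):=\{x\in\operatorname{dom} f:\ f(x)-g(x)\le\lambda\}$ (where $f(x)-g(x)=-\infty$ if $g(x)=+\infty$). $[t]^+:=\max\{0,t\}$, with $[f(x)-f(y)]^+:=0$ if $f(y)=+\infty$. For $x\in\operatorname{dom} f$, the global slope is $|\widetilde\nabla f|(x):=\sup_{y\neq x}\frac{[f(x)-f(y)]^+}{\rho(x,y)}\in[0,+\infty]$; for a restriction to a subset, $y$ ranges over the subset. *)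

theory Defs
  imports "HOL-Analysis.Analysis"
begin

text \<open>Extended-valued functions M \<rightarrow> R \<union> {+\<infinity>} are modelled as functions into ereal
  together with the hypothesis that -\<infinity> is never attained.\<close>

definition edom :: "('a \<Rightarrow> ereal) \<Rightarrow> 'a set" where
  "edom f = {x. f x < \<infinity>}"

text \<open>Sublevel set L_lambda(f - g); for x in dom f, f x - g x = -\<infinity> when g x = \<infinity>
  (this is ereal subtraction).\<close>
definition sublevel :: "real \<Rightarrow> ('a \<Rightarrow> ereal) \<Rightarrow> ('a \<Rightarrow> ereal) \<Rightarrow> 'a set" where
  "sublevel lam f g = {x \<in> edom f. f x - g x \<le> ereal lam}"

definition posdiff :: "ereal \<Rightarrow> ereal \<Rightarrow> ereal" where
  "posdiff a b = (if b = \<infinity> then 0 else max 0 (a - b))"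

text \<open>Global slope of f restricted to S at x (x \<in> S \<inter> dom f), value in [0,+\<infinity>];
  the supremum of the empty family is taken as 0.\<close>
definition gslope :: "'a::metric_space set \<Rightarrow> ('a \<Rightarrow> ereal) \<Rightarrow> 'a \<Rightarrow> ereal" where
  "gslope S f x = Sup ({0} \<union> (\<lambda>y. posdiff (f x) (f y) / ereal (dist x y)) ` (S - {x}))"

end

theory Submission
  imports Defs
begin

text \<open>The restriction to the sublevel set can only lower the slope, so it suffices to find,
  for every difference quotient of f at x beyond the slope of g, the corresponding point y
  inside L_lambda(f - g). If f falls from x to y faster than g does, then f - g decreases
  from x to y, so y lies in the sublevel set together with x.\<close>

definition slope_quotient :: "('a::metric_space \<Rightarrow> ereal) \<Rightarrow> 'a \<Rightarrow> 'a \<Rightarrow> ereal" where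
  "slope_quotient f x y = posdiff (f x) (f y) / ereal (dist x y)"

lemma gslope_altdef: "gslope S f x = Sup ({0} \<union> slope_quotient f x ` (S - {x}))"
  unfolding gslope_def slope_quotient_def by simp

lemma gslope_nonneg: "0 \<le> gslope S f x"
  unfolding gslope_def by (rule Sup_upper) simp

lemma slope_quotient_le_gslope: "y \<in> S \<Longrightarrow> y \<noteq> x \<Longrightarrow> slope_quotient f x y \<le> gslope S f x"
  unfolding gslope_altdef by (rule Sup_upper) simp

lemma gslope_mono: "S \<subseteq> T \<Longrightarrow> gslope S f x \<le> gslope T f x"
  unfolding gslope_def by (rule Sup_subset_mono) auto

lemma slope_quotient_nonneg: "0 \<le> slope_quotient f x y"
  unfolding slope_quotient_def posdiff_def by simp

lemma slope_quotient_infinite: "f y = \<infinity> \<Longrightarrow> slope_quotient f x y = 0"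
  by (simp add: slope_quotient_def posdiff_def)

lemma slope_quotient_real:
  assumes "f x = ereal a" "f y = ereal b" "x \<noteq> y"
  shows "slope_quotient f x y = ereal (max 0 (a - b) / dist x y)"
  using assms by (cases "0 \<le> a - b") (auto simp: slope_quotient_def posdiff_def max_def)

lemma diff_less_if_slope_quotient_less:
  fixes f g :: "'a::metric_space \<Rightarrow> ereal"
  assumes "f x = ereal fx" "g x = ereal gx" "f y = ereal fy" "g y = ereal gy" "x \<noteq> y"
    and "slope_quotient g x y < slope_quotient f x y"
  shows "fy - gy < fx - gx"
proof -
  have "max 0 (gx - gy) / dist x y < max 0 (fx - fy) / dist x y"
    using assms by (simp add: slope_quotient_real)
  then have "max 0 (gx - gy) < max 0 (fx - fy)"
    using \<open>x \<noteq> y\<close> by (simp add: divide_less_cancel)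
  then show ?thesis by linarith
qed

lemma sublevel_if_slope_quotient_less:
  fixes f g :: "'a::metric_space \<Rightarrow> ereal"
  assumes "\<forall>z. f z \<noteq> -\<infinity>" "\<forall>z. g z \<noteq> -\<infinity>"
    and "x \<in> sublevel lam f g" "x \<in> edom g" "y \<noteq> x"
    and "slope_quotient g x y < slope_quotient f x y"
  shows "y \<in> sublevel lam f g"
proof -
  obtain fx where fx: "f x = ereal fx"
    using assms(1,3) unfolding sublevel_def edom_def by (cases "f x") auto
  obtain gx where gx: "g x = ereal gx"
    using assms(2,4) unfolding edom_def by (cases "g x") auto
  have "f y \<noteq> \<infinity>"
    using assms(6) slope_quotient_nonneg[of g x y] slope_quotient_infinite[of f y x] by auto
  then obtain fy where fy: "f y = ereal fy"
    using assms(1) by (cases "f y") auto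
  show ?thesis
  proof (cases "g y = \<infinity>")
    case True
    then show ?thesis using fy by (simp add: sublevel_def edom_def)
  next
    case False
    then obtain gy where gy: "g y = ereal gy"
      using assms(2) by (cases "g y") auto
    have "fy - gy < fx - gx"
      using diff_less_if_slope_quotient_less[OF fx gx fy gy] assms(5,6) by simp
    moreover have "fx - gx \<le> lam"
      using assms(3) fx gx by (simp add: sublevel_def)
    ultimately show ?thesis using fy gy by (simp add: sublevel_def edom_def)
  qed
qed

lemma gslope_restrict_eq:
  assumes "S \<subseteq> T" and "c < gslope T f x"
    and "\<And>y. y \<in> T \<Longrightarrow> y \<noteq> x \<Longrightarrow> c < slope_quotient f x y \<Longrightarrow> y \<in> S"
  shows "gslope S f x = gslope T f x"
proof (rule antisym)
  show "gslope S f x \<le> gslope T f x"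
    using assms(1) by (rule gslope_mono)
  show "gslope T f x \<le> gslope S f x"
  proof (rule ccontr)
    assume "\<not> ?thesis"
    then have "max c (gslope S f x) < gslope T f x"
      using assms(2) by simp
    then obtain a where a: "a \<in> {0} \<union> slope_quotient f x ` (T - {x})"
      and a_gt: "max c (gslope S f x) < a"
      unfolding gslope_altdef[of T] less_Sup_iff by blast
    have "a \<noteq> 0"
      using a_gt gslope_nonneg[of S f x] by auto
    then obtain y where y: "y \<in> T" "y \<noteq> x" and "a = slope_quotient f x y"
      using a by auto
    with a_gt assms(3) have "y \<in> S" by simp
    with y \<open>a = slope_quotient f x y\<close> have "a \<le> gslope S f x"
      by (simp add: slope_quotient_le_gslope)
    then show False using a_gt by (auto dest: leD)
  qed
qed

theorem lemma2p5:
  fixes f g :: "'a::metric_space \<Rightarrow> ereal" and lam :: real and x :: 'a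
  assumes "\<forall>y. f y \<noteq> -\<infinity>" and "\<forall>y. g y \<noteq> -\<infinity>"
    and "sublevel lam f g \<inter> edom f \<inter> edom g \<noteq> {}"
    and "x \<in> sublevel lam f g" and "x \<in> edom g"
    and "gslope UNIV f x > gslope UNIV g x"
  shows "gslope (sublevel lam f g) f x = gslope UNIV f x"
proof (rule gslope_restrict_eq)
  show "gslope UNIV g x < gslope UNIV f x" by (fact assms(6))
  fix y
  assume y: "y \<noteq> x" and "gslope UNIV g x < slope_quotient f x y"
  moreover have "slope_quotient g x y \<le> gslope UNIV g x"
    using y by (simp add: slope_quotient_le_gslope)
  ultimately show "y \<in> sublevel lam f g"
    using assms(1,2,4,5) by (auto intro: sublevel_if_slope_quotient_less)
qed simp

end
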